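(* Let $d\ge 1$ and let $\mu$ be a probability distribution on $Q_d$ such that for all $i\in[d]$ \[ w_i^0\geq \begin{cases}\frac34-\frac1{4d} & \text{if $d$ is odd},\\[2pt] \frac34-\frac1{4(d-1)} & \text{if $d$ is even}.\end{cases} \] Then $(\mathbf 0,\mathbf 0)$ is an equilibrium.
   Context: $Q_d=\{0,1\}^d$ with the Hamming distance $d(X,Y)=|\{i: x_i\neq y_i\}|$. A probability distribution on $Q_d$ is a function $\mu:Q_d\to\mathbb R_{\ge0}$ with $\sum_{V\in Q_d}\mu(V)=1$, extended to subsets by $\mu(\mathcal A)=\sum_{V\in\mathcal A}\mu(V)$. For $A,B\in Q_d$ let $V(A,B)=\{X\in Q_d: d(X,A)<d(X,B)\}$ and $T(A,B)=\{X\in Q_d: d(X,A)=d(X,B)\}$. The payoffs in position $(A,B)$ (Player 1 at $A$, Player 2 at $B$) are $P_1(A,B)=\mu(V(A,B))+\frac12\mu(T(A,B))$ and $P_2(A,B)=\mu(V(B,A))+\frac12\mu(T(A,B))$. The pair $(A,B)$ is an equilibrium if $P_1(A,B)\ge P_1(A',B)$ for all $A'\in Q_d$ and $P_2(A,B)\ge P_2(A,B')$ for all $B'\in Q_d$. For $i\in[d]$, $w_i^0=\mu(\{X\in Q_d: x_i=0\})$. $\mathbf 0=(0,\dots,0)$. *)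

theory Defs
  imports Complex_Main
begin

text \<open>The hypercube Q_d: bit vectors of length d, represented as lists of booleans
  (False = 0, True = 1); coordinate i (0-based) is xs ! i.\<close>
definition cube :: "nat \<Rightarrow> bool list set" where
  "cube d = {xs. length xs = d}"

definition hdist :: "bool list \<Rightarrow> bool list \<Rightarrow> nat" where
  "hdist X Y = card {i. i < length X \<and> X ! i \<noteq> Y ! i}"

definition prob_dist :: "nat \<Rightarrow> (bool list \<Rightarrow> real) \<Rightarrow> bool" where
  "prob_dist d \<mu> \<longleftrightarrow> (\<forall>V\<in>cube d. \<mu> V \<ge> 0) \<and> (\<Sum>V\<in>cube d. \<mu> V) = 1"

definition measure_of :: "(bool list \<Rightarrow> real) \<Rightarrow> bool list set \<Rightarrow> real" where
  "measure_of \<mu> S = (\<Sum>V\<in>S. \<mu> V)"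

definition Vor :: "nat \<Rightarrow> bool list \<Rightarrow> bool list \<Rightarrow> bool list set" where
  "Vor d A B = {X\<in>cube d. hdist X A < hdist X B}"

definition Tie :: "nat \<Rightarrow> bool list \<Rightarrow> bool list \<Rightarrow> bool list set" where
  "Tie d A B = {X\<in>cube d. hdist X A = hdist X B}"

definition payoff1 :: "nat \<Rightarrow> (bool list \<Rightarrow> real) \<Rightarrow> bool list \<Rightarrow> bool list \<Rightarrow> real" where
  "payoff1 d \<mu> A B = measure_of \<mu> (Vor d A B) + measure_of \<mu> (Tie d A B) / 2"

definition payoff2 :: "nat \<Rightarrow> (bool list \<Rightarrow> real) \<Rightarrow> bool list \<Rightarrow> bool list \<Rightarrow> real" where
  "payoff2 d \<mu> A B = measure_of \<mu> (Vor d B A) + measure_of \<mu> (Tie d A B) / 2"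

definition equilibrium :: "nat \<Rightarrow> (bool list \<Rightarrow> real) \<Rightarrow> bool list \<Rightarrow> bool list \<Rightarrow> bool" where
  "equilibrium d \<mu> A B \<longleftrightarrow>
     (\<forall>A'\<in>cube d. payoff1 d \<mu> A B \<ge> payoff1 d \<mu> A' B) \<and>
     (\<forall>B'\<in>cube d. payoff2 d \<mu> A B \<ge> payoff2 d \<mu> A B')"

definition w0 :: "nat \<Rightarrow> (bool list \<Rightarrow> real) \<Rightarrow> nat \<Rightarrow> real" where
  "w0 d \<mu> i = measure_of \<mu> {X\<in>cube d. X ! i = False}"

definition zero_vec :: "nat \<Rightarrow> bool list" where
  "zero_vec d = replicate d False"

end

theory Submission
  imports Defs
begin

text \<open>Fix a deviation A with support S of size k and let Z X count the coordinates in S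
  at which X is 0. Then X is strictly closer to A than to 0 iff 2 Z X < k, and strictly closer
  to 0 iff 2 Z X > k. As Z X \<le> k and the mean of Z is the sum of the w_i^0 over S, the
  hypothesis lifts this mean to (k + m)/2 with m = floor((k-1)/2), the midpoint between the
  largest losing value m of Z and its maximum k. A Markov-type comparison then shows that 0
  collects at least as much mass as A, so no deviation beats the payoff 1/2 at (0, 0).\<close>

lemma finite_cube: "finite (cube d)"
  unfolding cube_def using finite_lists_length_eq[of "UNIV :: bool set" d] by simp

lemma measure_of_filter_cube:
  "measure_of \<mu> {X\<in>cube d. P X} = (\<Sum>X\<in>cube d. if P X then \<mu> X else 0)"
  unfolding measure_of_def using finite_cube by (simp add: sum.inter_filter)

lemma measure_of_Vor_Vor_Tie:
  "measure_of \<mu> (Vor d A B) + measure_of \<mu> (Vor d B A) + measure_of \<mu> (Tie d A B)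
     = (\<Sum>X\<in>cube d. \<mu> X)"
proof -
  have "measure_of \<mu> (Vor d A B) + measure_of \<mu> (Vor d B A) + measure_of \<mu> (Tie d A B) =
     (\<Sum>X\<in>cube d. (if hdist X A < hdist X B then \<mu> X else 0)
        + (if hdist X B < hdist X A then \<mu> X else 0)
        + (if hdist X A = hdist X B then \<mu> X else 0))"
    unfolding Vor_def Tie_def measure_of_filter_cube by (simp add: sum.distrib)
  also have "\<dots> = (\<Sum>X\<in>cube d. \<mu> X)" by (intro sum.cong) auto
  finally show ?thesis .
qed

lemma hdist_support_split:
  assumes X: "X \<in> cube d" and A: "A \<in> cube d"
  defines "S \<equiv> {i. i < d \<and> A ! i}"
  defines "Z \<equiv> card {i\<in>S. \<not> X ! i}"
  defines "W \<equiv> card {i. i < d \<and> \<not> A ! i \<and> X ! i}"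
  shows "hdist X A = Z + W" and "hdist X (zero_vec d) = (card S - Z) + W" and "Z \<le> card S"
proof -
  have len: "length X = d" using X by (simp add: cube_def)
  have fin: "finite S" unfolding S_def by simp
  have diff_A: "{i. i < length X \<and> X ! i \<noteq> A ! i}
      = {i\<in>S. \<not> X ! i} \<union> {i. i < d \<and> \<not> A ! i \<and> X ! i}"
    using len unfolding S_def by auto
  show "hdist X A = Z + W"
    unfolding hdist_def diff_A Z_def W_def by (subst card_Un_disjoint) (auto simp: S_def)
  have diff_0: "{i. i < length X \<and> X ! i \<noteq> zero_vec d ! i}
      = {i\<in>S. X ! i} \<union> {i. i < d \<and> \<not> A ! i \<and> X ! i}"
    using len unfolding S_def zero_vec_def by auto
  have "S = {i\<in>S. X ! i} \<union> {i\<in>S. \<not> X ! i}" by auto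
  then have "card S = card {i\<in>S. X ! i} + Z"
    unfolding Z_def using fin by (metis (no_types, lifting) card_Un_disjoint disjoint_iff finite_Un mem_Collect_eq)
  then have ones: "card {i\<in>S. X ! i} = card S - Z" by simp
  show "hdist X (zero_vec d) = (card S - Z) + W"
    unfolding hdist_def diff_0 W_def ones[symmetric] by (subst card_Un_disjoint) (auto simp: S_def)
  show "Z \<le> card S" unfolding Z_def using fin by (intro card_mono) auto
qed

lemma sum_w0_eq_sum_card_zeros:
  assumes "finite S"
  shows "(\<Sum>i\<in>S. w0 d \<mu> i) = (\<Sum>X\<in>cube d. \<mu> X * real (card {i\<in>S. \<not> X ! i}))"
proof -
  have "(\<Sum>i\<in>S. w0 d \<mu> i) = (\<Sum>i\<in>S. \<Sum>X\<in>cube d. if \<not> X ! i then \<mu> X else 0)"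
    unfolding w0_def by (simp add: measure_of_filter_cube)
  also have "\<dots> = (\<Sum>X\<in>cube d. \<Sum>i\<in>S. if \<not> X ! i then \<mu> X else 0)"
    by (rule sum.swap)
  also have "\<dots> = (\<Sum>X\<in>cube d. \<mu> X * real (card {i\<in>S. \<not> X ! i}))"
    using assms by (simp add: sum.inter_filter[symmetric] mult.commute)
  finally show ?thesis .
qed

definition majority_threshold :: "nat \<Rightarrow> real" where
  "majority_threshold k = (real k + real ((k - 1) div 2)) / 2"

lemma majority_threshold_le:
  fixes k d :: nat
  assumes "1 \<le> k" "k \<le> d"
  shows "majority_threshold k \<le>
     real k * (if odd d then 3/4 - 1/(4 * real d) else 3/4 - 1/(4 * (real d - 1)))"
proof -
  define c where "c = (if odd d then 3/4 - 1/(4 * real d) else 3/4 - 1/(4 * (real d - 1)))"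
  show ?thesis
  proof (cases "odd k")
    case True
    then obtain j where j: "k = 2 * j + 1" by (metis oddE)
    have "1/(4 * real d) \<le> 1/(4 * real k)" if "odd d"
      using assms by (intro frac_le) auto
    moreover have "1/(4 * (real d - 1)) \<le> 1/(4 * real k)" if "even d"
    proof -
      have "real k \<le> real d - 1" using assms True that by (cases "k = d") auto
      then show ?thesis using assms by (intro frac_le) auto
    qed
    ultimately have "3/4 - 1/(4 * real k) \<le> c" unfolding c_def by auto
    moreover have "majority_threshold k = real k * (3/4 - 1/(4 * real k))"
      using j by (simp add: majority_threshold_def field_simps)
    ultimately show ?thesis unfolding c_def[symmetric] using assms by (simp add: mult_left_mono)
  next
    case False
    then obtain j where "k = 2 * j" by (metis evenE not_not)
    with assms have j: "k = 2 * j" "j \<ge> 1" by auto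
    have "1/(4 * real d) \<le> 1/(2 * real k)" if "odd d"
      using assms by (intro frac_le) auto
    moreover have "1/(4 * (real d - 1)) \<le> 1/(2 * real k)" if "even d"
      using assms j by (intro frac_le) auto
    ultimately have "3/4 - 1/(2 * real k) \<le> c" unfolding c_def by auto
    moreover have "(k - 1) div 2 = j - 1" using j by presburger
    then have "majority_threshold k = real k * (3/4 - 1/(2 * real k))"
      using j by (simp add: majority_threshold_def field_simps of_nat_diff)
    ultimately show ?thesis unfolding c_def[symmetric] using assms by (simp add: mult_left_mono)
  qed
qed

text \<open>The step function on the right is -(k - m)/2, 0, (k - m)/2 according as 2 z <, =, > k,
  where m = (k - 1) div 2; the bound is tight at z = m and z = k, since 2 z < k iff z \<le> m.\<close>

lemma sub_majority_threshold_le_step: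
  fixes z k :: nat
  assumes "z \<le> k"
  shows "real z - majority_threshold k
    \<le> (real k - real ((k - 1) div 2)) / 2 * (of_bool (k < 2 * z) - of_bool (2 * z < k))"
proof -
  consider "2 * z < k" | "2 * z = k" | "k < 2 * z" by linarith
  then show ?thesis
  proof cases
    case 1
    then have "z \<le> (k - 1) div 2" by linarith
    then show ?thesis using 1 by (simp add: majority_threshold_def field_simps)
  next
    case 2
    then have "2 * real z = real k" by (metis of_nat_mult of_nat_numeral)
    then show ?thesis using 2 by (simp add: majority_threshold_def)
  next
    case 3
    then show ?thesis using assms by (simp add: majority_threshold_def field_simps)
  qed
qed

lemma majority_mass_le_of_mean:
  fixes \<mu> :: "'a \<Rightarrow> real" and Z :: "'a \<Rightarrow> nat"
  assumes fin: "finite C" and nonneg: "\<And>x. x \<in> C \<Longrightarrow> 0 \<le> \<mu> x"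
    and bounded: "\<And>x. x \<in> C \<Longrightarrow> Z x \<le> k"
    and mean: "majority_threshold k * (\<Sum>x\<in>C. \<mu> x) \<le> (\<Sum>x\<in>C. \<mu> x * real (Z x))"
  shows "(\<Sum>x\<in>{x\<in>C. 2 * Z x < k}. \<mu> x) \<le> (\<Sum>x\<in>{x\<in>C. k < 2 * Z x}. \<mu> x)"
proof (cases "k = 0")
  case True
  then show ?thesis using nonneg by (auto intro: sum_nonneg)
next
  case False
  define \<alpha> where "\<alpha> = (real k - real ((k - 1) div 2)) / 2"
  have "(k - 1) div 2 < k" using False by simp
  then have "\<alpha> > 0" unfolding \<alpha>_def by simp
  have "(\<Sum>x\<in>C. \<mu> x * (real (Z x) - majority_threshold k))
      = (\<Sum>x\<in>C. \<mu> x * real (Z x)) - (\<Sum>x\<in>C. \<mu> x) * majority_threshold k"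
    by (simp only: right_diff_distrib sum_subtractf sum_distrib_right)
  then have "0 \<le> (\<Sum>x\<in>C. \<mu> x * (real (Z x) - majority_threshold k))"
    using mean by (simp add: mult.commute)
  also have "\<dots> \<le> (\<Sum>x\<in>C. \<mu> x * (\<alpha> * (of_bool (k < 2 * Z x) - of_bool (2 * Z x < k))))"
    unfolding \<alpha>_def by (intro sum_mono mult_left_mono sub_majority_threshold_le_step bounded nonneg)
  also have "\<dots> = \<alpha> * ((\<Sum>x\<in>{x\<in>C. k < 2 * Z x}. \<mu> x) - (\<Sum>x\<in>{x\<in>C. 2 * Z x < k}. \<mu> x))"
  proof -
    have "(\<Sum>x\<in>C. \<mu> x * (\<alpha> * (of_bool (k < 2 * Z x) - of_bool (2 * Z x < k))))
        = (\<Sum>x\<in>C. \<alpha> * (if k < 2 * Z x then \<mu> x else 0) - \<alpha> * (if 2 * Z x < k then \<mu> x else 0))"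
      by (intro sum.cong) auto
    also have "\<dots> = \<alpha> * (\<Sum>x\<in>C. if k < 2 * Z x then \<mu> x else 0)
        - \<alpha> * (\<Sum>x\<in>C. if 2 * Z x < k then \<mu> x else 0)"
      by (simp only: sum_subtractf sum_distrib_left)
    finally show ?thesis
      using fin by (simp only: sum.inter_filter right_diff_distrib)
  qed
  finally show ?thesis using \<open>\<alpha> > 0\<close> by (simp add: zero_le_mult_iff)
qed

lemma measure_of_Vor_le_Vor_zero_vec:
  assumes pd: "prob_dist d \<mu>"
    and w: "\<forall>i<d. w0 d \<mu> i \<ge>
           (if odd d then 3/4 - 1/(4 * real d) else 3/4 - 1/(4 * (real d - 1)))"
    and A: "A \<in> cube d"
  shows "measure_of \<mu> (Vor d A (zero_vec d)) \<le> measure_of \<mu> (Vor d (zero_vec d) A)"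
proof -
  define S where "S = {i. i < d \<and> A ! i}"
  define k where "k = card S"
  define Z where "Z X = card {i\<in>S. \<not> X ! i}" for X
  have "finite S" unfolding S_def by simp
  have kd: "k \<le> d"
    unfolding k_def using card_mono[of "{..<d}" S] by (auto simp: S_def)
  have nonneg: "\<And>X. X \<in> cube d \<Longrightarrow> 0 \<le> \<mu> X" and total: "(\<Sum>X\<in>cube d. \<mu> X) = 1"
    using pd unfolding prob_dist_def by auto
  have Z_le: "Z X \<le> k" and closer_A: "hdist X A < hdist X (zero_vec d) \<longleftrightarrow> 2 * Z X < k"
    and closer_0: "hdist X (zero_vec d) < hdist X A \<longleftrightarrow> k < 2 * Z X" if "X \<in> cube d" for X
    using hdist_support_split[OF that A] unfolding Z_def k_def S_def by linarith+
  have Vor_A: "Vor d A (zero_vec d) = {X\<in>cube d. 2 * Z X < k}"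
    unfolding Vor_def using closer_A by blast
  have Vor_0: "Vor d (zero_vec d) A = {X\<in>cube d. k < 2 * Z X}"
    unfolding Vor_def using closer_0 by blast
  have "majority_threshold k \<le> (\<Sum>i\<in>S. w0 d \<mu> i)"
  proof (cases "k = 0")
    case True
    then show ?thesis using \<open>finite S\<close> unfolding k_def by (simp add: majority_threshold_def)
  next
    case False
    have "majority_threshold k
        \<le> real k * (if odd d then 3/4 - 1/(4 * real d) else 3/4 - 1/(4 * (real d - 1)))"
      using False kd by (intro majority_threshold_le) auto
    also have "\<dots> \<le> (\<Sum>i\<in>S. w0 d \<mu> i)"
      unfolding k_def using w by (simp only: sum_constant[symmetric]) (intro sum_mono, simp add: S_def)
    finally show ?thesis .
  qed
  also have "\<dots> = (\<Sum>X\<in>cube d. \<mu> X * real (Z X))"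
    unfolding Z_def using \<open>finite S\<close> by (rule sum_w0_eq_sum_card_zeros)
  finally show ?thesis
    unfolding Vor_A Vor_0 measure_of_def
    using majority_mass_le_of_mean[OF finite_cube nonneg Z_le] total by simp
qed

theorem mainTheorem2:
  fixes d :: nat and \<mu> :: "bool list \<Rightarrow> real"
  assumes "d \<ge> 1"
    and "prob_dist d \<mu>"
    and "\<forall>i<d. w0 d \<mu> i \<ge>
           (if odd d then 3/4 - 1/(4 * real d) else 3/4 - 1/(4 * (real d - 1)))"
  shows "equilibrium d \<mu> (zero_vec d) (zero_vec d)"
proof -
  have total: "(\<Sum>X\<in>cube d. \<mu> X) = 1" using assms(2) unfolding prob_dist_def by auto
  have at_origin: "payoff1 d \<mu> (zero_vec d) (zero_vec d) = 1/2"
    "payoff2 d \<mu> (zero_vec d) (zero_vec d) = 1/2"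
    unfolding payoff1_def payoff2_def Vor_def Tie_def measure_of_def using total by auto
  have deviation: "measure_of \<mu> (Vor d A (zero_vec d)) + measure_of \<mu> (Tie d A (zero_vec d)) / 2 \<le> 1/2"
    if "A \<in> cube d" for A
    using measure_of_Vor_le_Vor_zero_vec[OF assms(2,3) that]
      measure_of_Vor_Vor_Tie[of \<mu> d A "zero_vec d"] total by linarith
  have Tie_sym: "Tie d (zero_vec d) B = Tie d B (zero_vec d)" for B unfolding Tie_def by auto
  show ?thesis
    unfolding equilibrium_def at_origin
    using deviation unfolding payoff1_def payoff2_def Tie_sym by auto
qed

end
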